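(* Let $\sigma$ be a signature and $\varphi$ a $\mathcal{CO}_{\sqcup}[\sigma]$- or $\mathcal{COD}[\sigma]$-formula. (i) For any causal team $T$ over $\sigma$: $T\models^c\varphi$ iff $T^g\models^g\varphi$. (ii) For any generalized causal team $T$ over $\sigma$ in which all elements have the same function component: $T\models^g\varphi$ iff $T^c\models^c\varphi$.
   Context: A signature $\sigma=(\mathrm{Dom},\mathrm{Ran})$: $\mathrm{Dom}$ nonempty finite set of variables, each with nonempty finite range $\mathrm{Ran}(X)$; $\mathbf X=\mathbf x$ abbreviates $X_1=x_1\wedge\dots\wedge X_n=x_n$ ($\mathbf x\in\prod\mathrm{Ran}(X_i)$), inconsistent if it contains $X=x,X=x'$ with $x\ne x'$. Languages: $\mathcal{CO}[\sigma]$: $\alpha::=X=x\mid\neg\alpha\mid\alpha\wedge\alpha\mid\alpha\vee\alpha\mid\mathbf X=\mathbf x\;\Box\!\!\rightarrow\alpha$; $\mathcal{CO}_{\sqcup}[\sigma]$: $\varphi::=X=x\mid\neg\alpha\mid\varphi\wedge\varphi\mid\varphi\vee\varphi\mid\varphi\sqcup\varphi\mid\mathbf X=\mathbf x\;\Box\!\!\rightarrow\varphi$; $\mathcal{COD}[\sigma]$: $\varphi::=X=x\mid{=}(\mathbf X;Y)\mid\neg\alpha\mid\varphi\wedge\varphi\mid\varphi\vee\varphi\mid\mathbf X=\mathbf x\;\Box\!\!\rightarrow\varphi$ ($\alpha\in\mathcal{CO}[\sigma]$). Systems of functions $\mathcal F$: for each $V\in\mathrm{En}(\mathcal F)\subseteq\mathrm{Dom}$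 parents $PA^{\mathcal F}_V\subseteq\mathrm{Dom}\setminus\{V\}$ and $\mathcal F_V:\mathrm{Ran}(PA^{\mathcal F}_V)\to\mathrm{Ran}(V)$; $\mathrm{Ex}(\mathcal F)=\mathrm{Dom}\setminus\mathrm{En}(\mathcal F)$; only recursive (acyclic parent graph). An assignment $s$ is compatible with $\mathcal F$ if $s(V)=\mathcal F_V(s(PA^{\mathcal F}_V))$ for $V\in\mathrm{En}(\mathcal F)$. For consistent $\mathbf X=\mathbf x$: $\mathcal F_{\mathbf X=\mathbf x}$ restricts $\mathcal F$ to $\mathrm{En}(\mathcal F)\setminus\mathbf X$; $s^{\mathcal F}_{\mathbf X=\mathbf x}$: $X_i\mapsto x_i$, $V\mapsto s(V)$ on $\mathrm{Ex}(\mathcal F)\setminus\mathbf X$, $V\mapsto\mathcal F_V(s^{\mathcal F}_{\mathbf X=\mathbf x}(PA^{\mathcal F}_V))$ on $\mathrm{En}(\mathcal F)\setminus\mathbf X$. Causal team $T=(T^-,\mathcal F)$ ($T^-$ a set of compatible assignments; all teams with empty team component identified as $\emptyset$); causal subteams $(S^-,\mathcal F)$, $S^-\subseteq T^-$; $T_{\mathbf X=\mathbf x}=(\{s^{\mathcal F}_{\mathbf X=\mathbf x}:s\in T^-\},\mathcal F_{\mathbf X=\mathbf x})$. $\models^c$: $T\models X=x$ iff $s(X)=x$ for all $s\in T^-$; $T\models{=}(\mathbf X;Y)$ iff for all $s,s'\in T^-$, $s(\mathbf X)=s'(\mathbf X)$ implies $s(Y)=s'(Y)$; $T\models\neg\alpha$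 iff $(\{s\},\mathcal F)\not\models\alpha$ for all $s\in T^-$; $\wedge$ classical; $T\models\varphi\vee\psi$ iff causal subteams $T_1,T_2$ exist with $T_1^-\cup T_2^-=T^-$, $T_1\models\varphi$, $T_2\models\psi$; $T\models\varphi\sqcup\psi$ iff $T\models\varphi$ or $T\models\psi$; $T\models\mathbf X=\mathbf x\;\Box\!\!\rightarrow\varphi$ iff $\mathbf X=\mathbf x$ inconsistent or $T_{\mathbf X=\mathbf x}\models\varphi$. Generalized causal team: a set $T$ of compatible pairs $(s,\mathcal F)$ with $\mathcal F$ recursive; $T^-=\{s:(s,\mathcal F)\in T\}$; $T_{\mathbf X=\mathbf x}=\{(s^{\mathcal F}_{\mathbf X=\mathbf x},\mathcal F_{\mathbf X=\mathbf x}):(s,\mathcal F)\in T\}$; $\models^g$: same clauses except $T\models\neg\alpha$ iff $\{(s,\mathcal F)\}\not\models\alpha$ for all $(s,\mathcal F)\in T$, and $T\models\varphi\vee\psi$ iff $T=T_1\cup T_2$ with $T_1\models\varphi$, $T_2\models\psi$. For a causal team $T=(T^-,\mathcal F)$, $T^g=\{(s,\mathcal F):s\in T^-\}$. For a nonempty generalized causal team $T=\{(s,\mathcal F):s\in T^-\}$ with a single function component $\mathcal F$, $T^c=(T^-,\mathcal F)$; and $\emptyset^c=\emptyset$. *)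

theory Defs
  imports "HOL-Library.FuncSet"
begin

definition signature :: "'v set \<Rightarrow> ('v \<Rightarrow> 'a set) \<Rightarrow> bool" where
  "signature Dom Ran \<longleftrightarrow> finite Dom \<and> Dom \<noteq> {} \<and> (\<forall>X\<in>Dom. finite (Ran X) \<and> Ran X \<noteq> {})"

definition assignments :: "'v set \<Rightarrow> ('v \<Rightarrow> 'a set) \<Rightarrow> ('v \<Rightarrow> 'a) set" where
  "assignments Dom Ran = PiE Dom Ran"

text \<open>A system of functions: endogenous variables, parent sets, and for each endogenous V
  a function F_V : Ran(PA_V) -> Ran(V), given as an extensional function on assignments to PA_V.\<close>
record ('v, 'a) fsys =
  En :: "'v set"
  PA :: "'v \<Rightarrow> 'v set"
  Fn :: "'v \<Rightarrow> ('v \<Rightarrow> 'a) \<Rightarrow> 'a"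

definition parent_rel :: "('v, 'a) fsys \<Rightarrow> ('v \<times> 'v) set" where
  "parent_rel F = {(W, V). V \<in> En F \<and> W \<in> PA F V}"

definition recursive_fsys :: "'v set \<Rightarrow> ('v \<Rightarrow> 'a set) \<Rightarrow> ('v, 'a) fsys \<Rightarrow> bool" where
  "recursive_fsys Dom Ran F \<longleftrightarrow>
     En F \<subseteq> Dom \<and>
     (\<forall>V\<in>En F. PA F V \<subseteq> Dom - {V} \<and> Fn F V \<in> PiE (PiE (PA F V) Ran) (\<lambda>_. Ran V)) \<and>
     (\<forall>V. V \<notin> En F \<longrightarrow> PA F V = {} \<and> Fn F V = undefined) \<and>
     acyclic (parent_rel F)"

definition compatible :: "('v, 'a) fsys \<Rightarrow> ('v \<Rightarrow> 'a) \<Rightarrow> bool" where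
  "compatible F s \<longleftrightarrow> (\<forall>V\<in>En F. s V = Fn F V (restrict s (PA F V)))"

text \<open>Interventions X = x are lists of variable/value pairs.\<close>
definition consistent :: "('v \<times> 'a) list \<Rightarrow> bool" where
  "consistent xs \<longleftrightarrow> (\<forall>(X, x)\<in>set xs. \<forall>(X', x')\<in>set xs. X = X' \<longrightarrow> x = x')"

definition fsys_do :: "('v, 'a) fsys \<Rightarrow> ('v \<times> 'a) list \<Rightarrow> ('v, 'a) fsys" where
  "fsys_do F xs =
     \<lparr> En = En F - fst ` set xs,
       PA = (\<lambda>V. if V \<in> En F - fst ` set xs then PA F V else {}),
       Fn = (\<lambda>V. if V \<in> En F - fst ` set xs then Fn F V else undefined) \<rparr>"

text \<open>s^F_{X=x}: the (unique, by recursiveness) assignment satisfying the defining equations.\<close>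
definition assign_do :: "('v, 'a) fsys \<Rightarrow> ('v \<times> 'a) list \<Rightarrow> ('v \<Rightarrow> 'a) \<Rightarrow> ('v \<Rightarrow> 'a)" where
  "assign_do F xs s =
     (THE t. \<forall>V. t V = (if V \<in> fst ` set xs then the (map_of xs V)
                        else if V \<in> En F then Fn F V (restrict t (PA F V))
                        else s V))"

datatype ('v, 'a) fml =
    Eq 'v 'a
  | Dep "'v list" 'v
  | Neg "('v, 'a) fml"
  | Conj "('v, 'a) fml" "('v, 'a) fml"
  | Disj "('v, 'a) fml" "('v, 'a) fml"
  | IDisj "('v, 'a) fml" "('v, 'a) fml"
  | Cf "('v \<times> 'a) list" "('v, 'a) fml"

fun wf_fml :: "'v set \<Rightarrow> ('v \<Rightarrow> 'a set) \<Rightarrow> ('v, 'a) fml \<Rightarrow> bool" where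
  "wf_fml Dom Ran (Eq X x) = (X \<in> Dom \<and> x \<in> Ran X)"
| "wf_fml Dom Ran (Dep Xs Y) = (set Xs \<subseteq> Dom \<and> Y \<in> Dom)"
| "wf_fml Dom Ran (Neg a) = wf_fml Dom Ran a"
| "wf_fml Dom Ran (Conj a b) = (wf_fml Dom Ran a \<and> wf_fml Dom Ran b)"
| "wf_fml Dom Ran (Disj a b) = (wf_fml Dom Ran a \<and> wf_fml Dom Ran b)"
| "wf_fml Dom Ran (IDisj a b) = (wf_fml Dom Ran a \<and> wf_fml Dom Ran b)"
| "wf_fml Dom Ran (Cf xs a) = ((\<forall>(X, x)\<in>set xs. X \<in> Dom \<and> x \<in> Ran X) \<and> wf_fml Dom Ran a)"

fun is_CO :: "('v, 'a) fml \<Rightarrow> bool" where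
  "is_CO (Eq X x) = True"
| "is_CO (Dep Xs Y) = False"
| "is_CO (Neg a) = is_CO a"
| "is_CO (Conj a b) = (is_CO a \<and> is_CO b)"
| "is_CO (Disj a b) = (is_CO a \<and> is_CO b)"
| "is_CO (IDisj a b) = False"
| "is_CO (Cf xs a) = is_CO a"

fun is_CO_idisj :: "('v, 'a) fml \<Rightarrow> bool" where
  "is_CO_idisj (Eq X x) = True"
| "is_CO_idisj (Dep Xs Y) = False"
| "is_CO_idisj (Neg a) = is_CO a"
| "is_CO_idisj (Conj a b) = (is_CO_idisj a \<and> is_CO_idisj b)"
| "is_CO_idisj (Disj a b) = (is_CO_idisj a \<and> is_CO_idisj b)"
| "is_CO_idisj (IDisj a b) = (is_CO_idisj a \<and> is_CO_idisj b)"
| "is_CO_idisj (Cf xs a) = is_CO_idisj a"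

fun is_COD :: "('v, 'a) fml \<Rightarrow> bool" where
  "is_COD (Eq X x) = True"
| "is_COD (Dep Xs Y) = True"
| "is_COD (Neg a) = is_CO a"
| "is_COD (Conj a b) = (is_COD a \<and> is_COD b)"
| "is_COD (Disj a b) = (is_COD a \<and> is_COD b)"
| "is_COD (IDisj a b) = False"
| "is_COD (Cf xs a) = is_COD a"

type_synonym ('v, 'a) cteam = "('v \<Rightarrow> 'a) set \<times> ('v, 'a) fsys"

definition causal_team :: "'v set \<Rightarrow> ('v \<Rightarrow> 'a set) \<Rightarrow> ('v, 'a) cteam \<Rightarrow> bool" where
  "causal_team Dom Ran T \<longleftrightarrow> recursive_fsys Dom Ran (snd T) \<and>
     (\<forall>s\<in>fst T. s \<in> assignments Dom Ran \<and> compatible (snd T) s)"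

fun sat_c :: "('v \<Rightarrow> 'a) set \<Rightarrow> ('v, 'a) fsys \<Rightarrow> ('v, 'a) fml \<Rightarrow> bool" where
  "sat_c S F (Eq X x) = (\<forall>s\<in>S. s X = x)"
| "sat_c S F (Dep Xs Y) = (\<forall>s\<in>S. \<forall>s'\<in>S. (\<forall>X\<in>set Xs. s X = s' X) \<longrightarrow> s Y = s' Y)"
| "sat_c S F (Neg a) = (\<forall>s\<in>S. \<not> sat_c {s} F a)"
| "sat_c S F (Conj a b) = (sat_c S F a \<and> sat_c S F b)"
| "sat_c S F (Disj a b) = (\<exists>S1 S2. S1 \<subseteq> S \<and> S2 \<subseteq> S \<and> S1 \<union> S2 = S \<and> sat_c S1 F a \<and> sat_c S2 F b)"
| "sat_c S F (IDisj a b) = (sat_c S F a \<or> sat_c S F b)"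
| "sat_c S F (Cf xs a) = (\<not> consistent xs \<or> sat_c (assign_do F xs ` S) (fsys_do F xs) a)"

type_synonym ('v, 'a) gteam = "(('v \<Rightarrow> 'a) \<times> ('v, 'a) fsys) set"

definition gen_causal_team :: "'v set \<Rightarrow> ('v \<Rightarrow> 'a set) \<Rightarrow> ('v, 'a) gteam \<Rightarrow> bool" where
  "gen_causal_team Dom Ran T \<longleftrightarrow>
     (\<forall>(s, F)\<in>T. recursive_fsys Dom Ran F \<and> s \<in> assignments Dom Ran \<and> compatible F s)"

definition gteam_do :: "('v \<times> 'a) list \<Rightarrow> ('v, 'a) gteam \<Rightarrow> ('v, 'a) gteam" where
  "gteam_do xs T = (\<lambda>(s, F). (assign_do F xs s, fsys_do F xs)) ` T"

fun sat_g :: "('v, 'a) gteam \<Rightarrow> ('v, 'a) fml \<Rightarrow> bool" where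
  "sat_g T (Eq X x) = (\<forall>(s, F)\<in>T. s X = x)"
| "sat_g T (Dep Xs Y) = (\<forall>(s, F)\<in>T. \<forall>(s', F')\<in>T. (\<forall>X\<in>set Xs. s X = s' X) \<longrightarrow> s Y = s' Y)"
| "sat_g T (Neg a) = (\<forall>p\<in>T. \<not> sat_g {p} a)"
| "sat_g T (Conj a b) = (sat_g T a \<and> sat_g T b)"
| "sat_g T (Disj a b) = (\<exists>T1 T2. T = T1 \<union> T2 \<and> sat_g T1 a \<and> sat_g T2 b)"
| "sat_g T (IDisj a b) = (sat_g T a \<or> sat_g T b)"
| "sat_g T (Cf xs a) = (\<not> consistent xs \<or> sat_g (gteam_do xs T) a)"

definition to_g :: "('v, 'a) cteam \<Rightarrow> ('v, 'a) gteam" where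
  "to_g T = (\<lambda>s. (s, snd T)) ` fst T"

text \<open>For nonempty T with single function component F, T^c = (T^-, F); for T = {} the
  result is a causal team with empty team component (all such are identified with the empty team).\<close>
definition to_c :: "('v, 'a) gteam \<Rightarrow> ('v, 'a) cteam" where
  "to_c T = (fst ` T, snd (SOME p. p \<in> T))"

end

theory Submission
  imports Defs
begin

text \<open>A causal team \<open>(S, F)\<close> is the generalized team \<open>S \<times> {F}\<close>. Every subteam of such a
  generalized team, and every intervention on it, again has the single function component \<open>F\<close>
  (resp. \<open>F\<^sub>X\<^sub>=\<^sub>x\<close>), so the two satisfaction relations agree clause by clause.\<close>

lemma subset_Times_singleton_eq: "T \<subseteq> S \<times> {F} \<Longrightarrow> T = fst ` T \<times> {F}"
  by force

lemma gteam_do_Times_singleton: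
  "gteam_do xs (S \<times> {F}) = assign_do F xs ` S \<times> {fsys_do F xs}"
  unfolding gteam_do_def by force

lemma sat_c_Disj_iff_sat_g_Times_singleton:
  assumes IH_a: "\<And>S. sat_c S F a \<longleftrightarrow> sat_g (S \<times> {F}) a"
    and IH_b: "\<And>S. sat_c S F b \<longleftrightarrow> sat_g (S \<times> {F}) b"
  shows "sat_c S F (Disj a b) \<longleftrightarrow> sat_g (S \<times> {F}) (Disj a b)"
proof
  assume "sat_c S F (Disj a b)"
  then obtain S1 S2 where "S1 \<union> S2 = S" "sat_c S1 F a" "sat_c S2 F b"
    by auto
  then have "S \<times> {F} = S1 \<times> {F} \<union> S2 \<times> {F}" "sat_g (S1 \<times> {F}) a" "sat_g (S2 \<times> {F}) b"
    using IH_a IH_b by auto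
  then show "sat_g (S \<times> {F}) (Disj a b)"
    by auto
next
  assume "sat_g (S \<times> {F}) (Disj a b)"
  then obtain T1 T2 where T: "S \<times> {F} = T1 \<union> T2" "sat_g T1 a" "sat_g T2 b"
    by auto
  then have "T1 = fst ` T1 \<times> {F}" "T2 = fst ` T2 \<times> {F}"
    by (metis Un_upper1 Un_upper2 subset_Times_singleton_eq)+
  with T(2,3) have "sat_c (fst ` T1) F a" "sat_c (fst ` T2) F b"
    unfolding IH_a IH_b by metis+
  moreover have "fst ` T1 \<union> fst ` T2 = S"
    using T(1) by force
  ultimately show "sat_c S F (Disj a b)"
    by auto
qed

lemma sat_c_iff_sat_g_Times_singleton: "sat_c S F \<phi> \<longleftrightarrow> sat_g (S \<times> {F}) \<phi>"
proof (induction \<phi> arbitrary: S F)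
  case (Disj a b)
  then show ?case
    by (rule sat_c_Disj_iff_sat_g_Times_singleton)
next
  case (Cf xs a)
  then show ?case
    by (simp add: gteam_do_Times_singleton)
qed auto

lemma to_g_eq_Times: "to_g T = fst T \<times> {snd T}"
  unfolding to_g_def by auto

lemma uniform_gteam_eq_Times_to_c:
  assumes "\<forall>p\<in>T. \<forall>q\<in>T. snd p = snd q"
  shows "T = fst (to_c T) \<times> {snd (to_c T)}"
proof (cases "T = {}")
  case False
  then have "(SOME p. p \<in> T) \<in> T"
    by (simp add: some_in_eq)
  with assms have "\<forall>p\<in>T. snd p = snd (to_c T)"
    unfolding to_c_def snd_conv by blast
  then have "T \<subseteq> UNIV \<times> {snd (to_c T)}"
    by (auto simp: mem_Times_iff)
  then show ?thesis
    unfolding to_c_def fst_conv by (rule subset_Times_singleton_eq)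
next
  case True
  then show ?thesis
    by (simp add: to_c_def)
qed

theorem lemma2p16:
  fixes Dom :: "'v set" and Ran :: "'v \<Rightarrow> 'a set" and \<phi> :: "('v, 'a) fml"
  assumes "signature Dom Ran"
    and "wf_fml Dom Ran \<phi>"
    and "is_CO_idisj \<phi> \<or> is_COD \<phi>"
  shows "(\<forall>T. causal_team Dom Ran T \<longrightarrow> (sat_c (fst T) (snd T) \<phi> \<longleftrightarrow> sat_g (to_g T) \<phi>))
       \<and> (\<forall>T. gen_causal_team Dom Ran T \<and> (\<forall>p\<in>T. \<forall>q\<in>T. snd p = snd q) \<longrightarrow>
             (sat_g T \<phi> \<longleftrightarrow> sat_c (fst (to_c T)) (snd (to_c T)) \<phi>))"
proof (intro conjI allI impI)
  fix T :: "('v, 'a) cteam"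
  show "sat_c (fst T) (snd T) \<phi> \<longleftrightarrow> sat_g (to_g T) \<phi>"
    by (simp add: to_g_eq_Times sat_c_iff_sat_g_Times_singleton)
next
  fix T :: "('v, 'a) gteam"
  assume "gen_causal_team Dom Ran T \<and> (\<forall>p\<in>T. \<forall>q\<in>T. snd p = snd q)"
  then have "T = fst (to_c T) \<times> {snd (to_c T)}"
    using uniform_gteam_eq_Times_to_c by blast
  then show "sat_g T \<phi> \<longleftrightarrow> sat_c (fst (to_c T)) (snd (to_c T)) \<phi>"
    by (metis sat_c_iff_sat_g_Times_singleton)
qed

end
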